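(* Let $\rho$ be a normal ruling of a front of a Legendrian link $\Lambda$, let $o$ be an orientation of $\Lambda$ and $o^\rho$ an orientation of $\Lambda^\rho$. Then the quantity \[ e_2(\rho)\equiv s_-(\rho)+f_+(\rho,o,o^\rho)-f_-(\rho,o,o^\rho) \pmod 2 \] does not depend on the choices of $o$ and $o^\rho$.
   Context: Normal ruling: fix a front diagram of $\Lambda$ whose crossings and cusps have distinct $x$-coordinates. A normal ruling $\rho$ is a set of crossings (switches) such that, letting $\Lambda^\rho$ be the front obtained by resolving each switch into two horizontal non-crossing segments: (i) each component of $\Lambda^\rho$ is planar isotopic to the standard front of the maximal-$tb$ Legendrian unknot; (ii) exactly two components of $\Lambda^\rho$ are incident to each switch; (iii) in a small vertical strip around each switch, the two incident ruling disks are either nested or disjoint. $s_-(\rho)$ is the number of switches that are negative crossings (w.r.t. $o$). A crossing of $\Lambda^\rho$ is flipped if its sign computed from $o$ differs from its sign computed from $o^\rho$; $f_+(\rho,o,o^\rho)$ (resp. $f_-$) is the number of flipped crossings of $\Lambda^\rho$ that are positive (resp. negative) with respect to $o^\rho$. *)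

theory Defs
  imports Main "HOL-Number_Theory.Cong"
begin

text \<open>
Combinatorial model of a front diagram whose crossings and cusps have distinct
x-coordinates.  Reading the front from left to right, it is a word of events.
Between consecutive events the front consists of finitely many x-monotone
strands, indexed by their height order 0,1,2,... (0 = top).
  LCusp k : a left cusp appears; its two new strands occupy heights k, k+1;
  RCusp k : the strands at heights k, k+1 end in a right cusp;
  Cross k : the strands at heights k and k+1 cross.
Slice t (0 \<le> t \<le> length ev) is the vertical strip between event t-1 and event t;
a segment is a pair (t,i) = strand at height i in slice t.  Events are numbered
0..length ev - 1, event t lying between slices t and t+1.
\<close>

datatype event = LCusp nat | RCusp nat | Cross nat

fun wstep :: "nat \<Rightarrow> event \<Rightarrow> nat" where
  "wstep n (LCusp k) = n + 2"
| "wstep n (RCusp k) = n - 2"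
| "wstep n (Cross k) = n"

definition width :: "event list \<Rightarrow> nat \<Rightarrow> nat" where
  "width ev t = foldl wstep 0 (take t ev)"

definition valid_front :: "event list \<Rightarrow> bool" where
  "valid_front ev \<longleftrightarrow>
     (\<forall>t < length ev. (case ev ! t of
         LCusp k \<Rightarrow> k \<le> width ev t
       | RCusp k \<Rightarrow> k + 1 < width ev t
       | Cross k \<Rightarrow> k + 1 < width ev t))
     \<and> width ev (length ev) = 0"

definition segs :: "event list \<Rightarrow> (nat \<times> nat) set" where
  "segs ev = {(t, i). t \<le> length ev \<and> i < width ev t}"

definition swp :: "nat \<Rightarrow> nat \<Rightarrow> nat" where
  "swp k i = (if i = k then k + 1 else if i = k + 1 then k else i)"

text \<open>Continuation of the strand at height i in slice t across event t, in the front
obtained by resolving the crossings in S (S = {} gives the original front \<Lambda>,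
S = \<rho> gives \<Lambda>^\<rho>: a resolved switch becomes two horizontal non-crossing segments).\<close>

definition pass :: "event list \<Rightarrow> nat set \<Rightarrow> nat \<Rightarrow> nat \<Rightarrow> nat option" where
  "pass ev S t i = (case ev ! t of
      Cross k \<Rightarrow> Some (if t \<in> S then i else swp k i)
    | LCusp k \<Rightarrow> Some (if i < k then i else i + 2)
    | RCusp k \<Rightarrow> (if i = k \<or> i = k + 1 then None
                   else Some (if i < k then i else i - 2)))"

definition cont_edges :: "event list \<Rightarrow> nat set \<Rightarrow> ((nat \<times> nat) \<times> (nat \<times> nat)) set" where
  "cont_edges ev S = {((t, i), (t + 1, j)) | t i j.
      t < length ev \<and> i < width ev t \<and> pass ev S t i = Some j}"

definition cusp_edges :: "event list \<Rightarrow> ((nat \<times> nat) \<times> (nat \<times> nat)) set" where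
  "cusp_edges ev =
     {((t + 1, k), (t + 1, k + 1)) | t k. t < length ev \<and> ev ! t = LCusp k}
   \<union> {((t, k), (t, k + 1)) | t k. t < length ev \<and> ev ! t = RCusp k}"

text \<open>An orientation of the (resolved) front: a choice of x-direction
(True = rightward) on each segment, preserved along strands and reversed at cusps.\<close>
definition orientation :: "event list \<Rightarrow> nat set \<Rightarrow> (nat \<times> nat \<Rightarrow> bool) \<Rightarrow> bool" where
  "orientation ev S d \<longleftrightarrow>
     (\<forall>(a, b) \<in> cont_edges ev S. d a = d b) \<and> (\<forall>(a, b) \<in> cusp_edges ev. d a \<noteq> d b)"

definition conn :: "event list \<Rightarrow> nat set \<Rightarrow> ((nat \<times> nat) \<times> (nat \<times> nat)) set" where
  "conn ev S = ((cont_edges ev S \<union> cusp_edges ev) \<union> (cont_edges ev S \<union> cusp_edges ev)\<inverse>)\<^sup>*"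

definition comp :: "event list \<Rightarrow> nat set \<Rightarrow> nat \<times> nat \<Rightarrow> (nat \<times> nat) set" where
  "comp ev S x = {y \<in> segs ev. (x, y) \<in> conn ev S}"

definition components :: "event list \<Rightarrow> nat set \<Rightarrow> (nat \<times> nat) set set" where
  "components ev S = comp ev S ` segs ev"

definition is_cross :: "event \<Rightarrow> bool" where
  "is_cross e = (case e of Cross k \<Rightarrow> True | _ \<Rightarrow> False)"

text \<open>A component is planar isotopic to the standard max-tb unknot front (an "eye") iff it
has exactly one left cusp, exactly one right cusp and no self-crossings (crossings of the
resolved front with both strands in the component).\<close>
definition is_eye :: "event list \<Rightarrow> nat set \<Rightarrow> (nat \<times> nat) set \<Rightarrow> bool" where
  "is_eye ev S C \<longleftrightarrow>
     card {t. t < length ev \<and> (\<exists>k. ev ! t = LCusp k \<and> (t + 1, k) \<in> C)} = 1 \<and>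
     card {t. t < length ev \<and> (\<exists>k. ev ! t = RCusp k \<and> (t, k) \<in> C)} = 1 \<and>
     (\<forall>t k. t < length ev \<and> t \<notin> S \<and> ev ! t = Cross k \<longrightarrow>
          \<not> ((t, k) \<in> C \<and> (t, k + 1) \<in> C))"

definition heights :: "(nat \<times> nat) set \<Rightarrow> nat \<Rightarrow> nat set" where
  "heights C t = {i. (t, i) \<in> C}"

definition interleaved :: "nat set \<Rightarrow> nat set \<Rightarrow> bool" where
  "interleaved A B \<longleftrightarrow> (\<exists>a1 \<in> A. \<exists>a2 \<in> A. \<exists>b1 \<in> B. \<exists>b2 \<in> B. a1 < b1 \<and> b1 < a2 \<and> a2 < b2)"

definition normal_ruling :: "event list \<Rightarrow> nat set \<Rightarrow> bool" where
  "normal_ruling ev \<rho> \<longleftrightarrow>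
     \<rho> \<subseteq> {t. t < length ev \<and> is_cross (ev ! t)} \<and>
     (\<forall>C \<in> components ev \<rho>. is_eye ev \<rho> C) \<and>
     (\<forall>t \<in> \<rho>. \<forall>k. ev ! t = Cross k \<longrightarrow>
        comp ev \<rho> (t, k) \<noteq> comp ev \<rho> (t, k + 1) \<and>
        \<not> interleaved (heights (comp ev \<rho> (t, k)) t) (heights (comp ev \<rho> (t, k + 1)) t) \<and>
        \<not> interleaved (heights (comp ev \<rho> (t, k + 1)) t) (heights (comp ev \<rho> (t, k)) t))"

text \<open>Sign of the crossing at event t w.r.t. an orientation d: positive iff both strands
point in the same x-direction.\<close>
definition cross_pos :: "event list \<Rightarrow> (nat \<times> nat \<Rightarrow> bool) \<Rightarrow> nat \<Rightarrow> bool" where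
  "cross_pos ev d t = (case ev ! t of Cross k \<Rightarrow> d (t, k) = d (t, k + 1) | _ \<Rightarrow> True)"

definition s_minus :: "event list \<Rightarrow> nat set \<Rightarrow> (nat \<times> nat \<Rightarrow> bool) \<Rightarrow> nat" where
  "s_minus ev \<rho> o1 = card {t \<in> \<rho>. \<not> cross_pos ev o1 t}"

definition flipped :: "event list \<Rightarrow> nat set \<Rightarrow> (nat \<times> nat \<Rightarrow> bool) \<Rightarrow> (nat \<times> nat \<Rightarrow> bool) \<Rightarrow> nat set" where
  "flipped ev \<rho> o1 orr = {t. t < length ev \<and> is_cross (ev ! t) \<and> t \<notin> \<rho> \<and>
                          cross_pos ev o1 t \<noteq> cross_pos ev orr t}"

definition f_plus :: "event list \<Rightarrow> nat set \<Rightarrow> (nat \<times> nat \<Rightarrow> bool) \<Rightarrow> (nat \<times> nat \<Rightarrow> bool) \<Rightarrow> nat" where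
  "f_plus ev \<rho> o1 orr = card {t \<in> flipped ev \<rho> o1 orr. cross_pos ev orr t}"

definition f_minus :: "event list \<Rightarrow> nat set \<Rightarrow> (nat \<times> nat \<Rightarrow> bool) \<Rightarrow> (nat \<times> nat \<Rightarrow> bool) \<Rightarrow> nat" where
  "f_minus ev \<rho> o1 orr = card {t \<in> flipped ev \<rho> o1 orr. \<not> cross_pos ev orr t}"

end

theory Submission
  imports Defs
begin

text \<open>
  Let g mark the segments where o1 and o2 disagree, and h those where or1 and or2 disagree.
  Both are constant on the components of \<Lambda> resp. \<Lambda>^\<rho>.  Replacing o1 by o2 changes the sign
  of exactly the crossings whose two strands carry different g-values, and replacing or1 by or2
  changes the sign w.r.t. the ruling orientation of exactly the non-switch crossings with
  different h-values.  Since f_+ - f_- \<equiv> f_+ + f_- (mod 2), e_2 is the parity of the number of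
  negative switches plus flipped crossings, so it changes by the number of such bichromatic
  crossings, which is even: the inversion count of the g-colour word of a vertical slice changes
  parity exactly at bichromatic crossings and vanishes at both ends of the front.
\<close>

fun inversions :: "bool list \<Rightarrow> nat" where
  "inversions [] = 0"
| "inversions (x # xs) = (if x then length (filter Not xs) else 0) + inversions xs"

lemma inversions_append:
  "inversions (xs @ ys) = inversions xs + inversions ys + length (filter id xs) * length (filter Not ys)"
  by (induction xs) (auto simp: algebra_simps)

lemma even_inversions_swap:
  "even (inversions (xs @ a # b # ys) + inversions (xs @ b # a # ys) + of_bool (a \<noteq> b))"
  by (cases a; cases b) (auto simp: inversions_append algebra_simps)

lemma even_inversions_pair: "even (inversions (xs @ v # v # ys) + inversions (xs @ ys))"
proof -
  have "inversions (xs @ v # v # ys) = inversions (xs @ ys)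
          + 2 * (if v then length (filter Not ys) else length (filter id xs))"
    by (cases v) (simp_all add: inversions_append algebra_simps)
  then show ?thesis by simp
qed

lemma even_card_telescope:
  fixes f :: "nat \<Rightarrow> nat"
  assumes "\<And>t. t < n \<Longrightarrow> even (f (Suc t) + f t + of_bool (P t))"
  shows "even (f n + f 0 + card {t. t < n \<and> P t})"
  using assms
proof (induction n)
  case (Suc n)
  have "{t. t < Suc n \<and> P t} = {t. t < n \<and> P t} \<union> (if P n then {n} else {})"
    using less_Suc_eq by auto
  then have "card {t. t < Suc n \<and> P t} = card {t. t < n \<and> P t} + of_bool (P n)"
    by auto
  moreover have "even (f (Suc n) + f n + of_bool (P n))" "even (f n + f 0 + card {t. t < n \<and> P t})"
    using Suc by simp_all
  ultimately show ?case by presburger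
qed simp

lemma card_split:
  assumes "finite A"
  shows "card {x \<in> A. P x} = card {x \<in> A. P x \<and> R x} + card {x \<in> A. P x \<and> \<not> R x}"
proof -
  have "{x \<in> A. P x} = {x \<in> A. P x \<and> R x} \<union> {x \<in> A. P x \<and> \<not> R x}" by blast
  then show ?thesis using assms by (simp add: card_Un_disjoint disjoint_iff)
qed

lemma card_xor_cong:
  assumes "finite A"
  shows "[card {x \<in> A. P x \<noteq> Q x} = card {x \<in> A. P x} + card {x \<in> A. Q x}] (mod 2)"
proof -
  have "{x \<in> A. (P x \<noteq> Q x) \<and> P x} = {x \<in> A. P x \<and> \<not> Q x}"
    and "{x \<in> A. (P x \<noteq> Q x) \<and> \<not> P x} = {x \<in> A. Q x \<and> \<not> P x}"
    and "{x \<in> A. Q x \<and> P x} = {x \<in> A. P x \<and> Q x}"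
    by blast+
  then have "card {x \<in> A. P x} + card {x \<in> A. Q x}
               = card {x \<in> A. P x \<noteq> Q x} + 2 * card {x \<in> A. P x \<and> Q x}"
    using card_split[OF assms, of "\<lambda>x. P x \<noteq> Q x" P] card_split[OF assms, of P Q]
      card_split[OF assms, of Q P]
    by simp
  then show ?thesis
    by (simp add: cong_def)
qed

lemma width_Suc: "t < length ev \<Longrightarrow> width ev (Suc t) = wstep (width ev t) (ev ! t)"
  by (simp add: width_def take_Suc_conv_app_nth)

definition slice_word :: "(nat \<times> nat \<Rightarrow> bool) \<Rightarrow> event list \<Rightarrow> nat \<Rightarrow> bool list" where
  "slice_word g ev t = map (\<lambda>i. g (t, i)) [0..<width ev t]"

definition bichromatic :: "event list \<Rightarrow> (nat \<times> nat \<Rightarrow> bool) \<Rightarrow> nat \<Rightarrow> bool" where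
  "bichromatic ev g t \<longleftrightarrow> (\<exists>k. ev ! t = Cross k \<and> g (t, k) \<noteq> g (t, k + 1))"

lemma length_slice_word [simp]: "length (slice_word g ev t) = width ev t"
  by (simp add: slice_word_def)

lemma nth_slice_word [simp]: "i < width ev t \<Longrightarrow> slice_word g ev t ! i = g (t, i)"
  by (simp add: slice_word_def)

lemma take_nth_nth_drop:
  "k + 1 < length xs \<Longrightarrow> xs = take k xs @ xs ! k # xs ! (k + 1) # drop (k + 2) xs"
  by (metis Cons_nth_drop_Suc Suc_eq_plus1 Suc_lessD add_2_eq_Suc' append_take_drop_id add.commute)

context
  fixes ev :: "event list" and S :: "nat set" and g :: "nat \<times> nat \<Rightarrow> bool"
  assumes valid: "valid_front ev"
    and locally_constant: "\<And>a b. (a, b) \<in> cont_edges ev S \<union> cusp_edges ev \<Longrightarrow> g a = g b"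
begin

lemma label_pass:
  "t < length ev \<Longrightarrow> i < width ev t \<Longrightarrow> pass ev S t i = Some j \<Longrightarrow> g (Suc t, j) = g (t, i)"
  using locally_constant[of "(t, i)" "(Suc t, j)"] unfolding cont_edges_def by auto

lemma slice_word_switch:
  assumes "t < length ev" "ev ! t = Cross k" "t \<in> S"
  shows "slice_word g ev (Suc t) = slice_word g ev t"
  using assms label_pass[of t] by (intro nth_equalityI) (simp_all add: width_Suc pass_def)

lemma slice_word_crossing:
  assumes t: "t < length ev" and ev_t: "ev ! t = Cross k" and "t \<notin> S"
  defines "w \<equiv> slice_word g ev t"
  shows "w = take k w @ g (t, k) # g (t, k + 1) # drop (k + 2) w"
    and "slice_word g ev (Suc t) = take k w @ g (t, k + 1) # g (t, k) # drop (k + 2) w"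
proof -
  have k: "k + 1 < width ev t"
    using valid t ev_t by (force simp: valid_front_def)
  show "w = take k w @ g (t, k) # g (t, k + 1) # drop (k + 2) w"
    using take_nth_nth_drop[of k w] k by (simp add: w_def)
  have "g (Suc t, j) = g (t, swp k j)" if "j < width ev t" for j
    using label_pass[of t "swp k j" j] that k assms by (auto simp: pass_def swp_def)
  then show "slice_word g ev (Suc t) = take k w @ g (t, k + 1) # g (t, k) # drop (k + 2) w"
    using t ev_t k
    by (intro nth_equalityI)
      (auto simp: width_Suc w_def nth_append swp_def nth_Cons' Suc_diff_Suc numeral_2_eq_2)
qed

lemma slice_word_left_cusp:
  assumes t: "t < length ev" and ev_t: "ev ! t = LCusp k"
  defines "w \<equiv> slice_word g ev t"
  shows "slice_word g ev (Suc t) = take k w @ g (Suc t, k) # g (Suc t, k) # drop k w"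
proof -
  have k: "k \<le> width ev t"
    using valid t ev_t by (force simp: valid_front_def)
  have cusp: "g (Suc t, Suc k) = g (Suc t, k)"
    using locally_constant[of "(Suc t, k)" "(Suc t, Suc k)"] t ev_t by (auto simp: cusp_edges_def)
  have below: "g (Suc t, i) = g (t, i)" if "i < k" for i
    using label_pass[of t i] that k t ev_t by (simp add: pass_def)
  have above: "g (Suc t, i + 2) = g (t, i)" if "k \<le> i" "i < width ev t" for i
    using label_pass[of t i] that t ev_t by (simp add: pass_def)
  show ?thesis
  proof (rule nth_equalityI)
    fix j assume "j < length (slice_word g ev (Suc t))"
    then have j: "j < width ev t + 2" using t ev_t by (simp add: width_Suc)
    consider "j < k" | "j = k" | "j = Suc k" | "k + 2 \<le> j"
      by linarith
    then show "slice_word g ev (Suc t) ! j = (take k w @ g (Suc t, k) # g (Suc t, k) # drop k w) ! j"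
    proof cases
      case 1
      then show ?thesis using j k t ev_t below by (simp add: w_def nth_append width_Suc)
    next
      case 2
      then show ?thesis using j k t ev_t by (simp add: w_def nth_append width_Suc)
    next
      case 3
      then show ?thesis using j k t ev_t cusp by (simp add: w_def nth_append width_Suc)
    next
      case 4
      then obtain i where "j = i + 2" "k \<le> i"
        using le_Suc_ex[of "k + 2" j] by auto
      then show ?thesis using j k t ev_t above[of i] by (simp add: w_def nth_append width_Suc)
    qed
  qed (use t ev_t k in \<open>simp add: width_Suc w_def\<close>)
qed

lemma slice_word_right_cusp:
  assumes t: "t < length ev" and ev_t: "ev ! t = RCusp k"
  defines "w \<equiv> slice_word g ev t"
  shows "w = take k w @ g (t, k) # g (t, k) # drop (k + 2) w"
    and "slice_word g ev (Suc t) = take k w @ drop (k + 2) w"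
proof -
  have k: "k + 1 < width ev t"
    using valid t ev_t by (force simp: valid_front_def)
  have cusp: "g (t, Suc k) = g (t, k)"
    using locally_constant[of "(t, k)" "(t, Suc k)"] t ev_t by (auto simp: cusp_edges_def)
  show "w = take k w @ g (t, k) # g (t, k) # drop (k + 2) w"
    using take_nth_nth_drop[of k w] k cusp by (simp add: w_def)
  have below: "g (Suc t, i) = g (t, i)" if "i < k" for i
    using label_pass[of t i] that k t ev_t by (simp add: pass_def)
  have above: "g (Suc t, i) = g (t, i + 2)" if "k \<le> i" "i + 2 < width ev t" for i
    using label_pass[of t "i + 2"] that t ev_t by (simp add: pass_def)
  show "slice_word g ev (Suc t) = take k w @ drop (k + 2) w"
  proof (rule nth_equalityI)
    fix j assume "j < length (slice_word g ev (Suc t))"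
    then have j: "j + 2 < width ev t" using t ev_t by (simp add: width_Suc)
    show "slice_word g ev (Suc t) ! j = (take k w @ drop (k + 2) w) ! j"
      using j k t ev_t below[of j] above[of j]
      by (cases "j < k") (simp_all add: w_def nth_append width_Suc)
  qed (use t ev_t k in \<open>simp add: width_Suc w_def\<close>)
qed

lemma even_inversions_slice_step:
  assumes t: "t < length ev"
  shows "even (inversions (slice_word g ev (Suc t)) + inversions (slice_word g ev t)
               + of_bool (t \<notin> S \<and> bichromatic ev g t))"
proof (cases "ev ! t")
  case (Cross k)
  show ?thesis
  proof (cases "t \<in> S")
    case True
    then show ?thesis using slice_word_switch[OF t Cross] by simp
  next
    case False
    obtain xs ys where
      "slice_word g ev t = xs @ g (t, k) # g (t, k + 1) # ys"
      "slice_word g ev (Suc t) = xs @ g (t, k + 1) # g (t, k) # ys"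
      using slice_word_crossing[OF t Cross False] by blast
    moreover have "bichromatic ev g t \<longleftrightarrow> g (t, k + 1) \<noteq> g (t, k)"
      using Cross by (auto simp: bichromatic_def)
    ultimately show ?thesis
      using even_inversions_swap[of xs "g (t, k + 1)" "g (t, k)" ys] False by simp
  qed
next
  case (LCusp k)
  then show ?thesis
    using slice_word_left_cusp[OF t LCusp] even_inversions_pair
    by (simp add: bichromatic_def)
next
  case (RCusp k)
  obtain xs v ys where
    "slice_word g ev t = xs @ v # v # ys" "slice_word g ev (Suc t) = xs @ ys"
    using slice_word_right_cusp[OF t RCusp] by metis
  moreover have "\<not> bichromatic ev g t"
    using RCusp by (simp add: bichromatic_def)
  ultimately show ?thesis
    using even_inversions_pair[of xs v ys] by simp
qed

theorem even_card_bichromatic_crossings: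
  "even (card {t. t < length ev \<and> t \<notin> S \<and> bichromatic ev g t})"
proof -
  have "slice_word g ev 0 = []" "slice_word g ev (length ev) = []"
    using valid by (simp_all add: slice_word_def width_def valid_front_def)
  then show ?thesis
    using even_card_telescope[of "length ev" "\<lambda>t. inversions (slice_word g ev t)"]
      even_inversions_slice_step by simp
qed

end

lemma even_card_orientation_disagreements:
  assumes "valid_front ev" "orientation ev S d1" "orientation ev S d2"
  shows "even (card {t. t < length ev \<and> t \<notin> S \<and> bichromatic ev (\<lambda>x. d1 x \<noteq> d2 x) t})"
  using assms by (intro even_card_bichromatic_crossings) (auto simp: orientation_def)

definition e2_crossing ::
  "event list \<Rightarrow> nat set \<Rightarrow> (nat \<times> nat \<Rightarrow> bool) \<Rightarrow> (nat \<times> nat \<Rightarrow> bool) \<Rightarrow> nat \<Rightarrow> bool" where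
  "e2_crossing ev \<rho> d dr t \<longleftrightarrow> is_cross (ev ! t) \<and>
     (if t \<in> \<rho> then \<not> cross_pos ev d t else cross_pos ev d t \<noteq> cross_pos ev dr t)"

lemma e2_cong_card_e2_crossings:
  assumes "\<rho> \<subseteq> {t. t < length ev \<and> is_cross (ev ! t)}"
  shows "[int (s_minus ev \<rho> d) + int (f_plus ev \<rho> d dr) - int (f_minus ev \<rho> d dr)
          = int (card {t. t < length ev \<and> e2_crossing ev \<rho> d dr t})] (mod 2)"
proof -
  have fin_flipped: "finite (flipped ev \<rho> d dr)"
    by (simp add: flipped_def)
  have fin_switches: "finite \<rho>"
    using assms by (rule finite_subset) auto
  have "{t. t < length ev \<and> e2_crossing ev \<rho> d dr t}
          = {t \<in> \<rho>. \<not> cross_pos ev d t} \<union> flipped ev \<rho> d dr"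
    using assms by (auto simp: e2_crossing_def flipped_def)
  also have "card \<dots> = s_minus ev \<rho> d + card (flipped ev \<rho> d dr)"
    unfolding s_minus_def using fin_flipped fin_switches
    by (intro card_Un_disjoint) (auto simp: flipped_def)
  also have "card (flipped ev \<rho> d dr) = f_plus ev \<rho> d dr + f_minus ev \<rho> d dr"
    using card_split[OF fin_flipped, of "\<lambda>_. True" "cross_pos ev dr"]
    by (simp add: f_plus_def f_minus_def)
  finally show ?thesis
    by (simp add: cong_iff_dvd_diff)
qed

lemma e2_crossing_change_orientations:
  "e2_crossing ev \<rho> d2 dr2 t \<longleftrightarrow>
     e2_crossing ev \<rho> d1 dr1 t \<noteq>
       (bichromatic ev (\<lambda>x. d1 x \<noteq> d2 x) t \<noteq> (t \<notin> \<rho> \<and> bichromatic ev (\<lambda>x. dr1 x \<noteq> dr2 x) t))"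
  by (cases "ev ! t") (auto simp: e2_crossing_def bichromatic_def cross_pos_def is_cross_def)

lemma card_e2_crossings_cong:
  assumes "valid_front ev"
    and "orientation ev {} d1" "orientation ev {} d2"
    and "orientation ev \<rho> dr1" "orientation ev \<rho> dr2"
  shows "[card {t. t < length ev \<and> e2_crossing ev \<rho> d1 dr1 t}
          = card {t. t < length ev \<and> e2_crossing ev \<rho> d2 dr2 t}] (mod 2)"
proof -
  let ?E = "\<lambda>d dr. card {t. t < length ev \<and> e2_crossing ev \<rho> d dr t}"
  let ?G = "\<lambda>t. bichromatic ev (\<lambda>x. d1 x \<noteq> d2 x) t"
  let ?H = "\<lambda>t. t \<notin> \<rho> \<and> bichromatic ev (\<lambda>x. dr1 x \<noteq> dr2 x) t"
  have "even (card {t. t < length ev \<and> ?G t})"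
    using even_card_orientation_disagreements[OF assms(1-3)] by simp
  moreover have "even (card {t. t < length ev \<and> ?H t})"
    using even_card_orientation_disagreements[OF assms(1,4,5)] by (simp add: conj_assoc)
  ultimately have "[card {t. t < length ev \<and> (?G t \<noteq> ?H t)} = 0] (mod 2)"
    using card_xor_cong[of "{..<length ev}" ?G ?H] by (simp add: cong_def)
  then have "[?E d1 dr1 + card {t. t < length ev \<and> (?G t \<noteq> ?H t)} = ?E d1 dr1 + 0] (mod 2)"
    by (rule cong_add[OF cong_refl])
  moreover have "[?E d2 dr2 = ?E d1 dr1 + card {t. t < length ev \<and> (?G t \<noteq> ?H t)}] (mod 2)"
    using card_xor_cong[of "{..<length ev}" "e2_crossing ev \<rho> d1 dr1" "\<lambda>t. ?G t \<noteq> ?H t"]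
    by (simp only: e2_crossing_change_orientations[of ev \<rho> d2 dr2 _ d1 dr1]) simp
  ultimately have "[?E d2 dr2 = ?E d1 dr1 + 0] (mod 2)"
    by (rule cong_trans[rotated])
  then show ?thesis
    by (simp add: cong_sym_eq)
qed

theorem lemma3p2:
  fixes ev :: "event list" and \<rho> :: "nat set"
    and o1 o2 or1 or2 :: "nat \<times> nat \<Rightarrow> bool"
  assumes "valid_front ev"
    and "normal_ruling ev \<rho>"
    and "orientation ev {} o1" and "orientation ev {} o2"
    and "orientation ev \<rho> or1" and "orientation ev \<rho> or2"
  shows "[int (s_minus ev \<rho> o1) + int (f_plus ev \<rho> o1 or1) - int (f_minus ev \<rho> o1 or1)
        = int (s_minus ev \<rho> o2) + int (f_plus ev \<rho> o2 or2) - int (f_minus ev \<rho> o2 or2)] (mod 2)"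
proof -
  let ?E = "\<lambda>d dr. int (card {t. t < length ev \<and> e2_crossing ev \<rho> d dr t})"
  have switches: "\<rho> \<subseteq> {t. t < length ev \<and> is_cross (ev ! t)}"
    using assms(2) by (simp add: normal_ruling_def)
  have "[?E o1 or1 = ?E o2 or2] (mod int 2)"
    using card_e2_crossings_cong[OF assms(1) assms(3-6)] by (simp only: cong_int_iff)
  then have "[?E o1 or1 = ?E o2 or2] (mod 2)"
    by simp
  with e2_cong_card_e2_crossings[OF switches, of o1 or1]
  have "[int (s_minus ev \<rho> o1) + int (f_plus ev \<rho> o1 or1) - int (f_minus ev \<rho> o1 or1)
         = ?E o2 or2] (mod 2)"
    by (rule cong_trans)
  then show ?thesis
    using e2_cong_card_e2_crossings[OF switches, of o2 or2] by (rule cong_trans[OF _ cong_sym])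
qed

end
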